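(* Let $f$ be an entire function of genus $1$ having only negative zeros and such that $f(0)>0$; denote its zeros, repeated according to multiplicity, by $-a_1,-a_2,\ldots$ with $0<a_1\leq a_2\leq\cdots$. Let $a>0$, $b>0$ and $c=a+b$. Then the function $$x\mapsto\log\frac{f(x+a)f(x+b)}{f(x)f(x+c)},\qquad x>0,$$ is a generalized Stieltjes function of order $2$, and its representing measure has density $\chi_{(0,a)}*\chi_{(0,b)}*\mu$ with respect to Lebesgue measure, where $\mu=\sum_{n}\epsilon_{a_n}$.
   Context: A generalized Stieltjes function of order $2$ is a function $F(x)=\int_0^\infty\frac{d\mu(t)}{(x+t)^2}+c$ on $(0,\infty)$ with $\mu$ a positive measure on $[0,\infty)$ (the representing measure) making the integral converge and $c\geq0$. $\chi_I$ is the indicator function of $I$, $\epsilon_s$ the point mass at $s$, and $*$ denotes convolution. *)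

theory Defs
  imports "HOL-Analysis.Analysis"
begin

text \<open>Zeros of f are -r n for n in N, where N is either all of nat (infinitely
many zeros) or an initial segment {..<m} (finitely many zeros).\<close>

definition admissible_index :: "nat set \<Rightarrow> bool" where
  "admissible_index N \<longleftrightarrow> N = UNIV \<or> (\<exists>m. N = {..<m})"

text \<open>f is an entire function of genus 1 whose zeros (with multiplicity) are exactly
the points -r n, n in N, with 0 < r 0 <= r 1 <= ..., and f 0 > 0.  By the
definition of the genus via the Hadamard/Weierstrass factorization this means
f z = C exp(alpha z) prod (1 + z/r n) exp(-z/r n) with C = f 0 > 0,
sum 1/r_n^2 < infinity, and the genus is not 0, i.e. it is not the case that
sum 1/r_n < infinity and f z = C prod (1 + z/r n).\<close>

definition genus1_neg_zeros :: "(complex \<Rightarrow> complex) \<Rightarrow> (nat \<Rightarrow> real) \<Rightarrow> nat set \<Rightarrow> bool" where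
  "genus1_neg_zeros f r N \<longleftrightarrow>
     admissible_index N \<and>
     f holomorphic_on UNIV \<and>
     (\<forall>n\<in>N. 0 < r n) \<and>
     (\<forall>m\<in>N. \<forall>n\<in>N. m \<le> n \<longrightarrow> r m \<le> r n) \<and>
     summable (\<lambda>n. if n \<in> N then 1 / (r n)^2 else 0) \<and>
     Re (f 0) > 0 \<and> Im (f 0) = 0 \<and>
     (\<exists>\<alpha>::complex.
        (\<forall>z. (\<lambda>n. if n \<in> N then (1 + z / of_real (r n)) * exp (- z / of_real (r n)) else 1)
               has_prod (f z / (f 0 * exp (\<alpha> * z)))) \<and>
        \<not> (summable (\<lambda>n. if n \<in> N then 1 / r n else 0) \<and>
           \<alpha> = of_real (\<Sum>n. if n \<in> N then 1 / r n else 0)))"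

definition conv_fun :: "(real \<Rightarrow> real) \<Rightarrow> (real \<Rightarrow> real) \<Rightarrow> real \<Rightarrow> real" where
  "conv_fun \<phi> \<psi> t = (LINT s|lborel. \<phi> s * \<psi> (t - s))"

definition conv_pointmasses :: "(real \<Rightarrow> real) \<Rightarrow> (nat \<Rightarrow> real) \<Rightarrow> nat set \<Rightarrow> real \<Rightarrow> real" where
  "conv_pointmasses h r N t = (\<Sum>n. if n \<in> N then h (t - r n) else 0)"

definition gen_stieltjes2_density :: "(real \<Rightarrow> real) \<Rightarrow> (real \<Rightarrow> real) \<Rightarrow> bool" where
  "gen_stieltjes2_density F g \<longleftrightarrow>
     (\<forall>t\<ge>0. 0 \<le> g t) \<and> g \<in> borel_measurable lborel \<and>
     (\<exists>c\<ge>0. \<forall>x>0. set_integrable lborel {0..} (\<lambda>t. g t / (x + t)^2) \<and>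
                    F x = (LINT t:{0..}|lborel. g t / (x + t)^2) + c)"

end

theory Submission
  imports Defs
begin

text \<open>In the Hadamard product of f the exponential factors cancel from the quotient,
because (x + a) + (x + b) = x + (x + c); hence its logarithm is the sum over n of L(x + a_n),
where L(y) = log((y + a)(y + b) / (y (y + c))).  The convolution h of the indicators of (0,a)
and (0,b) is the trapezoid s_+ - (s - a)_+ - (s - b)_+ + (s - c)_+, and integrating each ramp
against (y + s)^-2 with an explicit primitive gives L(y) = integral of h(s) / (y + s)^2 ds.
Translating by a_n and summing by monotone convergence yields the density h * mu; all series
converge by comparison with the sum of a_n^-2.\<close>

definition trapezoid :: "real \<Rightarrow> real \<Rightarrow> real \<Rightarrow> real" where
  "trapezoid a b s = max 0 s - max 0 (s - a) - max 0 (s - b) + max 0 (s - (a + b))"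

lemma conv_fun_indicator_Ioo:
  assumes "a \<ge> 0" "b \<ge> 0"
  shows "conv_fun (indicator {0<..<a}) (indicator {0<..<b}) = trapezoid a b"
proof
  fix s
  have "(\<lambda>u. indicator {0<..<a} u * indicator {0<..<b} (s - u) :: real)
        = indicator {max 0 (s - b)<..<min a s}"
    by (rule ext) (auto simp: indicator_def)
  then have "conv_fun (indicator {0<..<a}) (indicator {0<..<b}) s
      = measure lborel {max 0 (s - b)<..<min a s}"
    by (simp add: conv_fun_def)
  also have "\<dots> = max 0 (min a s - max 0 (s - b))"
    by (cases "max 0 (s - b) \<le> min a s") auto
  also have "\<dots> = trapezoid a b s"
    using assms unfolding trapezoid_def by (simp add: max_def min_def)
  finally show "conv_fun (indicator {0<..<a}) (indicator {0<..<b}) s = trapezoid a b s" .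
qed

lemma trapezoid_nonneg: "a \<ge> 0 \<Longrightarrow> b \<ge> 0 \<Longrightarrow> 0 \<le> trapezoid a b s"
  unfolding trapezoid_def by (simp add: max_def)

lemma trapezoid_le: "a \<ge> 0 \<Longrightarrow> b \<ge> 0 \<Longrightarrow> trapezoid a b s \<le> a"
  unfolding trapezoid_def by (simp add: max_def)

lemma trapezoid_eq_0: "a \<ge> 0 \<Longrightarrow> b \<ge> 0 \<Longrightarrow> s \<le> 0 \<or> a + b \<le> s \<Longrightarrow> trapezoid a b s = 0"
  unfolding trapezoid_def by (auto simp: max_def)

lemma borel_measurable_trapezoid [measurable]:
  "(\<lambda>t. trapezoid a b (f t)) \<in> borel_measurable M" if [measurable]: "f \<in> borel_measurable M"
  unfolding trapezoid_def by measurable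

definition log_ratio :: "real \<Rightarrow> real \<Rightarrow> real \<Rightarrow> real" where
  "log_ratio a b y = ln (y + a) + ln (y + b) - ln y - ln (y + (a + b))"

lemma exp_log_ratio:
  assumes "y > 0" "a \<ge> 0" "b \<ge> 0"
  shows "exp (log_ratio a b y) = (y + a) * (y + b) / (y * (y + (a + b)))"
  using assms by (simp add: log_ratio_def exp_diff exp_add)

lemma log_ratio_bounds:
  assumes "y > 0" "a \<ge> 0" "b \<ge> 0"
  shows "0 \<le> log_ratio a b y" "log_ratio a b y \<le> a * b / y^2"
proof -
  have "y * (y + (a + b)) > 0"
    using assms by simp
  then have q: "(y + a) * (y + b) / (y * (y + (a + b))) = 1 + a * b / (y * (y + (a + b)))"
    by (simp add: field_simps)
  have "log_ratio a b y = ln (1 + a * b / (y * (y + (a + b))))"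
    using arg_cong[OF exp_log_ratio[OF assms], of ln] unfolding q by simp
  moreover have "0 \<le> a * b / (y * (y + (a + b)))"
    using assms by simp
  moreover have "a * b / (y * (y + (a + b))) \<le> a * b / y^2"
    using assms by (intro divide_left_mono) (auto simp: power2_eq_square intro!: mult_left_mono)
  ultimately show "0 \<le> log_ratio a b y" "log_ratio a b y \<le> a * b / y^2"
    using ln_add_one_self_le_self by (auto intro: order_trans)
qed

lemma ramp_primitive_has_derivative:
  fixes y d t :: real
  assumes "y + d > 0" "y + t > 0" "t \<noteq> d"
  shows "((\<lambda>t. ln (y + max t d) + (y + d) / (y + max t d))
           has_real_derivative max 0 (t - d) / (y + t)^2) (at t)"
proof (cases "d < t")
  case True
  have "((\<lambda>t. ln (y + t) + (y + d) / (y + t))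
          has_real_derivative 1 / (y + t) - (y + d) / (y + t)^2) (at t)"
    using assms(1,2)
    by (auto intro!: derivative_eq_intros simp: power2_eq_square) (simp add: minus_divide_left)
  also have "1 / (y + t) - (y + d) / (y + t)^2 = max 0 (t - d) / (y + t)^2"
    using assms(1,2) True by (simp add: divide_simps power2_eq_square)
  finally show ?thesis
    by (rule has_field_derivative_transform_within_open[where S = "{d<..}"]) (use True in auto)
next
  case False
  with assms have "t < d"
    by simp
  then have "((\<lambda>_. ln (y + d) + 1) has_real_derivative max 0 (t - d) / (y + t)^2) (at t)"
    by simp
  then show ?thesis
    by (rule has_field_derivative_transform_within_open[where S = "{..<d}"])
       (use \<open>t < d\<close> assms in auto)
qed

lemma trapezoid_moment_has_integral:
  assumes "y > 0" "a \<ge> 0" "b \<ge> 0"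
  shows "((\<lambda>s. trapezoid a b s / (y + s)^2) has_integral log_ratio a b y) UNIV"
proof -
  define G where "G d t = ln (y + max t d) + (y + d) / (y + max t d)" for d t :: real
  define H where "H t = G 0 t - G a t - G b t + G (a + b) t" for t
  have "((\<lambda>s. trapezoid a b s / (y + s)^2) has_integral H (a + b) - H 0) {0..a + b}"
  proof (rule fundamental_theorem_of_calculus_interior_strong[where S = "{a, b}"])
    have "continuous_on {0..a + b} (G d)" if "d \<ge> 0" for d
    proof -
      have "y + max t d > 0" for t
        using assms that by linarith
      then show ?thesis
        unfolding G_def by (intro continuous_intros) (auto simp: less_imp_neq[symmetric])
    qed
    then show "continuous_on {0..a + b} H"
      unfolding H_def using assms by (intro continuous_intros) auto
  next
    fix t assume t: "t \<in> {0<..<a + b} - {a, b}"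
    have "(H has_real_derivative max 0 (t - 0) / (y + t)^2 - max 0 (t - a) / (y + t)^2
            - max 0 (t - b) / (y + t)^2 + max 0 (t - (a + b)) / (y + t)^2) (at t)"
      unfolding H_def G_def using assms t
      by (intro derivative_intros ramp_primitive_has_derivative) auto
    then show "(H has_vector_derivative trapezoid a b t / (y + t)^2) (at t)"
      by (simp add: has_real_derivative_iff_has_vector_derivative trapezoid_def
          diff_divide_distrib add_divide_distrib)
  qed (use assms in auto)
  moreover have "H (a + b) - H 0 = log_ratio a b y"
  proof -
    have top: "G d (a + b) = ln (y + (a + b)) + (y + d) / (y + (a + b))" if "d \<le> a + b" for d
      using that by (simp add: G_def max_def)
    have bottom: "G d 0 = ln (y + d) + 1" if "d \<ge> 0" for d
      using that assms by (simp add: G_def max_def)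
    have "y + (a + b) \<noteq> 0"
      using assms by linarith
    then have "H (a + b) = 0"
      using assms by (simp add: H_def top divide_simps) (simp add: algebra_simps)
    moreover have "H 0 = - log_ratio a b y"
      using assms by (simp add: H_def bottom log_ratio_def)
    ultimately show ?thesis
      by simp
  qed
  ultimately have "((\<lambda>s. trapezoid a b s / (y + s)^2) has_integral log_ratio a b y) {0..a + b}"
    by simp
  moreover have "trapezoid a b s / (y + s)^2 = 0" if "s \<notin> {0..a + b}" for s
  proof -
    from that have "s \<le> 0 \<or> a + b \<le> s"
      by auto
    then show ?thesis
      using assms by (simp add: trapezoid_eq_0)
  qed
  ultimately show ?thesis
    by (rule has_integral_on_superset) auto
qed

lemma nn_integral_trapezoid_shift:
  assumes "x + R > 0" "a \<ge> 0" "b \<ge> 0"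
  shows "(\<integral>\<^sup>+ t. ennreal (trapezoid a b (t - R) / (x + t)^2) \<partial>lborel)
           = ennreal (log_ratio a b (x + R))"
proof -
  have "(\<integral>\<^sup>+ t. ennreal (trapezoid a b (t - R) / (x + t)^2) \<partial>lborel)
      = (\<integral>\<^sup>+ s. ennreal (trapezoid a b s / ((x + R) + s)^2) \<partial>lborel)"
    using nn_integral_real_affine[where c = 1 and t = R,
        of "\<lambda>t. ennreal (trapezoid a b (t - R) / (x + t)^2)"]
    by (simp add: add_ac)
  also have "\<dots> = ennreal (log_ratio a b (x + R))"
    using assms trapezoid_nonneg[OF assms(2,3)]
    by (intro nn_integral_has_integral_lborel trapezoid_moment_has_integral) auto
  finally show ?thesis .
qed

lemma summable_trapezoid_shifts:
  assumes "a \<ge> 0" "b \<ge> 0" "\<And>n. n \<in> N \<Longrightarrow> r n > 0"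
    and "summable (\<lambda>n. if n \<in> N then 1 / (r n)^2 else 0)"
  shows "summable (\<lambda>n. if n \<in> N then trapezoid a b (t - r n) else 0)"
proof (rule summable_comparison_test')
  show "summable (\<lambda>n. a * t^2 * (if n \<in> N then 1 / (r n)^2 else 0))"
    using assms(4) by (rule summable_mult)
  have "trapezoid a b (t - R) \<le> a * t^2 * (1 / R^2)" if "R > 0" for R
  proof (cases "R < t")
    case True
    with that have "R^2 \<le> t^2"
      by (intro power_mono) auto
    with that have "1 \<le> t^2 / R^2"
      by simp
    then have "a * 1 \<le> a * (t^2 / R^2)"
      using assms(1) by (intro mult_left_mono)
    then show ?thesis
      using trapezoid_le[OF assms(1,2), of "t - R"] by simp
  next
    case False
    then show ?thesis
      using assms(1) trapezoid_eq_0[OF assms(1,2), of "t - R"] by simp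
  qed
  then show "norm (if n \<in> N then trapezoid a b (t - r n) else 0)
               \<le> a * t^2 * (if n \<in> N then 1 / (r n)^2 else 0)" for n
    using assms(3)[of n] trapezoid_nonneg[OF assms(1,2)] by auto
qed

lemma summable_log_ratio_shifts:
  assumes "a \<ge> 0" "b \<ge> 0" "x > 0" "\<And>n. n \<in> N \<Longrightarrow> r n > 0"
    and "summable (\<lambda>n. if n \<in> N then 1 / (r n)^2 else 0)"
  shows "summable (\<lambda>n. if n \<in> N then log_ratio a b (x + r n) else 0)"
proof (rule summable_comparison_test')
  show "summable (\<lambda>n. a * b * (if n \<in> N then 1 / (r n)^2 else 0))"
    using assms(5) by (rule summable_mult)
  have "\<bar>log_ratio a b (x + R)\<bar> \<le> a * b * (1 / R^2)" if "R > 0" for R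
  proof -
    have "log_ratio a b (x + R) \<le> a * b / (x + R)^2"
      using that assms by (intro log_ratio_bounds) auto
    also have "\<dots> \<le> a * b / R^2"
      using that assms by (intro divide_left_mono power_mono) auto
    finally show ?thesis
      using that assms log_ratio_bounds(1)[of "x + R" a b] by simp
  qed
  then show "norm (if n \<in> N then log_ratio a b (x + r n) else 0)
               \<le> a * b * (if n \<in> N then 1 / (r n)^2 else 0)" for n
    using assms(4)[of n] by auto
qed

lemma integral_trapezoid_shift_sums:
  assumes a: "a \<ge> 0" and b: "b \<ge> 0" and r: "\<And>n. n \<in> N \<Longrightarrow> r n > 0"
    and summ: "summable (\<lambda>n. if n \<in> N then 1 / (r n)^2 else 0)" and x: "x > 0"
  shows "integrable lborel
           (\<lambda>t. (\<Sum>n. if n \<in> N then trapezoid a b (t - r n) else 0) / (x + t)^2)"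
    and "(\<integral>t. (\<Sum>n. if n \<in> N then trapezoid a b (t - r n) else 0) / (x + t)^2 \<partial>lborel)
           = (\<Sum>n. if n \<in> N then log_ratio a b (x + r n) else 0)"
proof -
  define k where "k n t = (if n \<in> N then trapezoid a b (t - r n) / (x + t)^2 else 0)" for n t
  define l where "l n = (if n \<in> N then log_ratio a b (x + r n) else 0)" for n
  have k_measurable: "k n \<in> borel_measurable borel" for n
    unfolding k_def by measurable
  have k_nonneg: "0 \<le> k n t" for n t
    unfolding k_def using trapezoid_nonneg[OF a b] by simp
  have k_integral: "integrable lborel (k n) \<and> integral\<^sup>L lborel (k n) = l n" for n
  proof (cases "n \<in> N")
    case True
    have "(\<integral>\<^sup>+ t. ennreal (k n t) \<partial>lborel) = ennreal (l n)"
      unfolding k_def l_def using True x r[OF True]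
      by (simp add: nn_integral_trapezoid_shift a b)
    moreover have "0 \<le> l n"
      unfolding l_def using True x r[OF True] log_ratio_bounds(1)[OF _ a b] by simp
    ultimately show ?thesis
      using k_nonneg k_measurable by (subst (asm) nn_integral_eq_integrable) auto
  next
    case False
    then have "k n = (\<lambda>_. 0)"
      by (simp add: k_def fun_eq_iff)
    then show ?thesis
      using False by (simp add: l_def)
  qed
  have k_sums: "summable (\<lambda>n. k n t)
      \<and> (\<Sum>n. if n \<in> N then trapezoid a b (t - r n) else 0) / (x + t)^2 = (\<Sum>n. k n t)" for t
  proof -
    have "(\<lambda>n. k n t) = (\<lambda>n. (if n \<in> N then trapezoid a b (t - r n) else 0) / (x + t)^2)"
      unfolding k_def by auto
    then show ?thesis
      using summable_trapezoid_shifts[OF a b r summ, of t] by (simp add: summable_divide suminf_divide)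
  qed
  have "summable l"
    unfolding l_def using a b x r summ by (rule summable_log_ratio_shifts)
  then have "integrable lborel (\<lambda>t. \<Sum>n. k n t)" and "(\<integral>t. (\<Sum>n. k n t) \<partial>lborel) = (\<Sum>n. l n)"
    using k_integral k_sums k_nonneg by (simp_all add: integrable_suminf integral_suminf)
  then show "integrable lborel
           (\<lambda>t. (\<Sum>n. if n \<in> N then trapezoid a b (t - r n) else 0) / (x + t)^2)"
    and "(\<integral>t. (\<Sum>n. if n \<in> N then trapezoid a b (t - r n) else 0) / (x + t)^2 \<partial>lborel)
           = (\<Sum>n. if n \<in> N then log_ratio a b (x + r n) else 0)"
    using k_sums by (simp_all add: l_def)
qed

lemma gen_stieltjes2_density_shift_sums:
  assumes a: "a \<ge> 0" and b: "b \<ge> 0" and r: "\<And>n. n \<in> N \<Longrightarrow> r n > 0"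
    and summ: "summable (\<lambda>n. if n \<in> N then 1 / (r n)^2 else 0)"
  shows "gen_stieltjes2_density (\<lambda>x. \<Sum>n. if n \<in> N then log_ratio a b (x + r n) else 0)
           (\<lambda>t. \<Sum>n. if n \<in> N then trapezoid a b (t - r n) else 0)"
    (is "gen_stieltjes2_density ?F ?g")
proof -
  have g_nonneg: "0 \<le> ?g t" for t
    using trapezoid_nonneg[OF a b]
    by (intro suminf_nonneg summable_trapezoid_shifts[OF a b r summ]) auto
  have g_vanishes: "?g t = 0" if "t < 0" for t
  proof -
    have "(\<lambda>n. if n \<in> N then trapezoid a b (t - r n) else 0) = (\<lambda>_. 0)"
      using that r trapezoid_eq_0[OF a b] by fastforce
    then show ?thesis
      by simp
  qed
  have g_indicator: "(\<lambda>t. indicator {0..} t *\<^sub>R (?g t / (x + t)^2)) = (\<lambda>t. ?g t / (x + t)^2)" for x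
  proof (rule ext)
    show "indicator {0..} t *\<^sub>R (?g t / (x + t)^2) = ?g t / (x + t)^2" for t
      using g_vanishes[of t] by (cases "0 \<le> t") auto
  qed
  show ?thesis
    unfolding gen_stieltjes2_density_def set_integrable_def set_lebesgue_integral_def g_indicator
  proof (intro conjI allI impI exI[of _ 0])
    show "0 \<le> ?g t" for t
      by (rule g_nonneg)
    show "?g \<in> borel_measurable lborel"
      by measurable
    fix x :: real
    assume "x > 0"
    then show "integrable lborel (\<lambda>t. ?g t / (x + t)^2)"
      and "?F x = (\<integral>t. ?g t / (x + t)^2 \<partial>lborel) + 0"
      using integral_trapezoid_shift_sums[OF a b r summ] by simp_all
  qed simp
qed

lemma canonical_factor_ratio:
  fixes R u v w z :: complex
  assumes "R \<noteq> 0" "u + v = w + z"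
  shows "(1 + u / R) * exp (- u / R) * ((1 + v / R) * exp (- v / R))
           / ((1 + w / R) * exp (- w / R) * ((1 + z / R) * exp (- z / R)))
         = (R + u) * (R + v) / ((R + w) * (R + z))"
proof -
  define E where "E t = exp (- t / R)" for t
  have "- u / R + - v / R = - w / R + - z / R"
    using assms by (simp add: field_simps)
  then have E_eq: "E u * E v = E w * E z"
    by (simp add: E_def exp_add [symmetric])
  have E_nz: "E w * E z \<noteq> 0"
    by (simp add: E_def)
  have one_plus: "1 + t / R = (R + t) / R" for t
    using assms(1) by (simp add: field_simps)
  have "(1 + u / R) * E u * ((1 + v / R) * E v) / ((1 + w / R) * E w * ((1 + z / R) * E z))
      = ((R + u) * (R + v)) * (E u * E v) / R^2 / (((R + w) * (R + z)) * (E w * E z) / R^2)"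
    unfolding one_plus by (simp add: power2_eq_square ac_simps)
  also have "\<dots> = (R + u) * (R + v) / ((R + w) * (R + z))"
    using assms(1) E_eq E_nz by simp
  finally show ?thesis
    unfolding E_def .
qed

lemma canonical_product_shift_ratio:
  fixes f :: "complex \<Rightarrow> complex" and r :: "nat \<Rightarrow> real" and \<alpha> :: complex
  assumes prod: "\<And>z. (\<lambda>n. if n \<in> N then (1 + z / of_real (r n)) * exp (- z / of_real (r n)) else 1)
                      has_prod (f z / (f 0 * exp (\<alpha> * z)))"
    and r: "\<And>n. n \<in> N \<Longrightarrow> r n > 0" and f0: "f 0 \<noteq> 0"
    and x: "x > 0" and a: "a \<ge> 0" and b: "b \<ge> 0"
    and sums: "(\<lambda>n. if n \<in> N then log_ratio a b (x + r n) else 0) sums S"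
  shows "f (of_real (x + a)) * f (of_real (x + b)) / (f (of_real x) * f (of_real (x + (a + b))))
           = of_real (exp S)"
proof -
  define p where "p z n = (if n \<in> N then (1 + z / of_real (r n)) * exp (- z / of_real (r n)) else 1)"
    for z :: complex and n
  define P where "P z = f z / (f 0 * exp (\<alpha> * z))" for z :: complex
  define l where "l n = (if n \<in> N then log_ratio a b (x + r n) else 0)" for n
  define u v w z where "u = complex_of_real (x + a)" and "v = complex_of_real (x + b)"
    and "w = complex_of_real x" and "z = complex_of_real (x + (a + b))"
  have uvwz: "u + v = w + z"
    by (simp add: u_def v_def w_def z_def)
  have "(\<lambda>n. p u n * p v n / (p w n * p z n)) has_prod (P u * P v / (P w * P z))"
    unfolding p_def P_def by (intro has_prod_divide has_prod_mult prod)
  moreover have "p u n * p v n / (p w n * p z n) = exp (of_real (l n))" for n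
  proof (cases "n \<in> N")
    case True
    have "p u n * p v n / (p w n * p z n)
        = (of_real (r n) + u) * (of_real (r n) + v) / ((of_real (r n) + w) * (of_real (r n) + z))"
      unfolding p_def if_P[OF True] using r[OF True] uvwz by (intro canonical_factor_ratio) auto
    also have "\<dots> = of_real ((x + r n + a) * (x + r n + b) / ((x + r n) * (x + r n + (a + b))))"
      by (simp add: u_def v_def w_def z_def add_ac)
    also have "\<dots> = exp (of_real (l n))"
      using True r[OF True] x a b by (simp add: l_def exp_log_ratio flip: of_real_exp)
    finally show ?thesis .
  qed (simp add: p_def l_def)
  ultimately have "(\<lambda>n. exp (complex_of_real (l n))) has_prod (P u * P v / (P w * P z))"
    by simp
  moreover have "(\<lambda>n. exp (complex_of_real (l n))) has_prod exp (of_real S)"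
    using sums unfolding l_def has_prod_def by (intro disjI1 sums_imp_has_prod_exp sums_of_real)
  ultimately have P_ratio: "P u * P v / (P w * P z) = exp (of_real S)"
    by (rule has_prod_unique2)
  define K where "K y = f 0 * exp (\<alpha> * y)" for y
  have "K u * K v = K w * K z"
    using uvwz by (simp add: K_def exp_add [symmetric] distrib_left [symmetric] ac_simps)
  moreover have "K u * K v \<noteq> 0"
    using f0 by (simp add: K_def)
  ultimately have "P u * P v / (P w * P z) = f u * f v / (f w * f z)"
    unfolding P_def K_def [symmetric] by simp
  then show ?thesis
    using P_ratio by (simp add: u_def v_def w_def z_def of_real_exp)
qed

theorem proposition4p4:
  fixes f :: "complex \<Rightarrow> complex" and r :: "nat \<Rightarrow> real" and N :: "nat set"
    and a b c :: real
  assumes "genus1_neg_zeros f r N"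
    and "a > 0" and "b > 0" and "c = a + b"
  shows "\<exists>F. (\<forall>x>0. complex_of_real (F x) =
                 Ln (f (of_real (x + a)) * f (of_real (x + b)) / (f (of_real x) * f (of_real (x + c)))))
          \<and> gen_stieltjes2_density F
              (conv_pointmasses (conv_fun (indicator {0<..<a}) (indicator {0<..<b})) r N)"
proof -
  have a: "a \<ge> 0" and b: "b \<ge> 0"
    using assms(2,3) by auto
  from assms(1) obtain \<alpha> where
    prod: "\<And>z. (\<lambda>n. if n \<in> N then (1 + z / of_real (r n)) * exp (- z / of_real (r n)) else 1)
             has_prod (f z / (f 0 * exp (\<alpha> * z)))"
    and r: "\<And>n. n \<in> N \<Longrightarrow> r n > 0"
    and summ: "summable (\<lambda>n. if n \<in> N then 1 / (r n)^2 else 0)"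
    and f0: "f 0 \<noteq> 0"
    unfolding genus1_neg_zeros_def by force
  define F where "F x = (\<Sum>n. if n \<in> N then log_ratio a b (x + r n) else 0)" for x
  have "complex_of_real (F x) =
          Ln (f (of_real (x + a)) * f (of_real (x + b)) / (f (of_real x) * f (of_real (x + c))))"
    if x: "x > 0" for x
  proof -
    have "(\<lambda>n. if n \<in> N then log_ratio a b (x + r n) else 0) sums F x"
      unfolding F_def using a b x r summ by (intro summable_sums summable_log_ratio_shifts)
    from canonical_product_shift_ratio[OF prod r f0 x a b this] show ?thesis
      using assms(4) by (simp add: Ln_of_real)
  qed
  moreover have "gen_stieltjes2_density F
      (conv_pointmasses (conv_fun (indicator {0<..<a}) (indicator {0<..<b})) r N)"
    unfolding F_def conv_pointmasses_def conv_fun_indicator_Ioo[OF a b]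
    using a b r summ by (rule gen_stieltjes2_density_shift_sums)
  ultimately show ?thesis
    by blast
qed

end
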